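(* Let $G$ be a closed, geodesically convex subset of an Alexandrov space $(X,d)$ with $(G,d)$ separable, let $K>0$, let $(\Pi,\mathcal A,\mu)$ be a complete probability space, and let $L:\Pi\to F_K(G)$ be a random lower semi-continuous $K$-convex function. Define $f(x):=\int_\Pi L(a,x)\,d\mu(a)$ for $x\in G$. If there exists an integrable function $\alpha_0:\Pi\to(-\infty,+\infty)$ such that $L(a,x)\ge\alpha_0(a)$ holds almost surely, then $f:G\to(-\infty,+\infty]$ is lower semi-continuous and $K$-convex, and $f(x)>-\infty$ for all $x\in G$.
   Context: $F_K(G)$ denotes the set of lower semi-continuous $K$-convex functions $h:G\to(-\infty,\infty]$ not identically $+\infty$, where $h$ is $K$-convex if $h(x\#_ty)\le(1-t)h(x)+th(y)-\frac K2t(1-t)d(x,y)^2$ for all $x,y\in G$, $t\in[0,1]$ and all minimal geodesics $x\#_ty$ (curves with $d(x\#_sy,x\#_ty)=|s-t|d(x,y)$). A map $L:\Pi\to F_K(G)$, $a\mapsto L(a,\cdot)$, is a random lower semi-continuous $K$-convex function if $(a,x)\mapsto L(a,x)$ is $\mathcal A\otimes\mathcal B(G)$-measurable, $\mathcal B(G)$ being the Borel $\sigma$-algebra of $(G,d)$. *)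

theory Defs
  imports "HOL-Analysis.Analysis" "HOL-Probability.Probability"
begin

definition min_geodesic :: "(real \<Rightarrow> 'a::metric_space) \<Rightarrow> 'a \<Rightarrow> 'a \<Rightarrow> bool" where
  "min_geodesic \<gamma> x y \<longleftrightarrow> \<gamma> 0 = x \<and> \<gamma> 1 = y \<and>
     (\<forall>s\<in>{0..1}. \<forall>t\<in>{0..1}. dist (\<gamma> s) (\<gamma> t) = \<bar>s - t\<bar> * dist x y)"

definition geodesic_space :: "'a::metric_space itself \<Rightarrow> bool" where
  "geodesic_space _ \<longleftrightarrow> (\<forall>x y::'a. \<exists>\<gamma>. min_geodesic \<gamma> x y)"

text \<open>Distance in the model plane of constant curvature kappa from the vertex p~ of a
  comparison triangle with side lengths a = |p x|, b = |p y|, c = |x y| to the point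
  dividing the side x~y~ in ratio t : (1-t).\<close>
definition model_dist :: "real \<Rightarrow> real \<Rightarrow> real \<Rightarrow> real \<Rightarrow> real \<Rightarrow> real" where
  "model_dist \<kappa> a b c t =
    (if c = 0 then a
     else if \<kappa> = 0 then sqrt ((1 - t) * a\<^sup>2 + t * b\<^sup>2 - t * (1 - t) * c\<^sup>2)
     else if \<kappa> > 0 then
       (let s = sqrt \<kappa> in
        arccos ((sin ((1 - t) * s * c) * cos (s * a) + sin (t * s * c) * cos (s * b)) / sin (s * c)) / s)
     else
       (let s = sqrt (- \<kappa>) in
        arcosh ((sinh ((1 - t) * s * c) * cosh (s * a) + sinh (t * s * c) * cosh (s * b)) / sinh (s * c)) / s))"

definition admissible_triangle :: "real \<Rightarrow> 'a::metric_space \<Rightarrow> 'a \<Rightarrow> 'a \<Rightarrow> bool" where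
  "admissible_triangle \<kappa> p x y \<longleftrightarrow>
     (\<kappa> \<le> 0 \<or> dist p x + dist p y + dist x y < 2 * pi / sqrt \<kappa>)"

definition curv_ge :: "real \<Rightarrow> 'a::metric_space itself \<Rightarrow> bool" where
  "curv_ge \<kappa> _ \<longleftrightarrow> (\<forall>(p::'a) x y \<gamma> t. admissible_triangle \<kappa> p x y \<longrightarrow> min_geodesic \<gamma> x y
      \<longrightarrow> t \<in> {0..1} \<longrightarrow> dist p (\<gamma> t) \<ge> model_dist \<kappa> (dist p x) (dist p y) (dist x y) t)"

definition curv_le :: "real \<Rightarrow> 'a::metric_space itself \<Rightarrow> bool" where
  "curv_le \<kappa> _ \<longleftrightarrow> (\<forall>(p::'a) x y \<gamma> t. admissible_triangle \<kappa> p x y \<longrightarrow> min_geodesic \<gamma> x y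
      \<longrightarrow> t \<in> {0..1} \<longrightarrow> dist p (\<gamma> t) \<le> model_dist \<kappa> (dist p x) (dist p y) (dist x y) t)"

definition alexandrov_space :: "'a::metric_space itself \<Rightarrow> bool" where
  "alexandrov_space T \<longleftrightarrow> Topological_Spaces.complete (UNIV :: 'a set) \<and> geodesic_space T \<and>
     (\<exists>\<kappa>. curv_ge \<kappa> T \<or> curv_le \<kappa> T)"

definition geodesically_convex :: "'a::metric_space set \<Rightarrow> bool" where
  "geodesically_convex G \<longleftrightarrow>
     (\<forall>x\<in>G. \<forall>y\<in>G. \<forall>\<gamma>. min_geodesic \<gamma> x y \<longrightarrow> (\<forall>t\<in>{0..1}. \<gamma> t \<in> G))"

definition separable_set :: "'a::metric_space set \<Rightarrow> bool" where
  "separable_set G \<longleftrightarrow> (\<exists>D. countable D \<and> D \<subseteq> G \<and> G \<subseteq> closure D)"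

definition lsc_on :: "'a::metric_space set \<Rightarrow> ('a \<Rightarrow> ereal) \<Rightarrow> bool" where
  "lsc_on G h \<longleftrightarrow> (\<forall>x\<in>G. \<forall>c. c < h x \<longrightarrow>
      (\<exists>e>0. \<forall>y\<in>G. dist y x < e \<longrightarrow> c < h y))"

definition K_convex_on :: "real \<Rightarrow> 'a::metric_space set \<Rightarrow> ('a \<Rightarrow> ereal) \<Rightarrow> bool" where
  "K_convex_on K G h \<longleftrightarrow> (\<forall>x\<in>G. \<forall>y\<in>G. \<forall>\<gamma>. min_geodesic \<gamma> x y \<longrightarrow> (\<forall>t\<in>{0..1}.
      h (\<gamma> t) \<le> ereal (1 - t) * h x + ereal t * h y - ereal (K / 2 * t * (1 - t) * (dist x y)\<^sup>2)))"

definition F_K :: "real \<Rightarrow> 'a::metric_space set \<Rightarrow> ('a \<Rightarrow> ereal) set" where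
  "F_K K G = {h. lsc_on G h \<and> K_convex_on K G h \<and> (\<forall>x\<in>G. h x \<noteq> -\<infinity>) \<and> (\<exists>x\<in>G. h x \<noteq> \<infinity>)}"

definition random_lsc_K_convex ::
    "'b measure \<Rightarrow> real \<Rightarrow> 'a::metric_space set \<Rightarrow> ('b \<Rightarrow> 'a \<Rightarrow> ereal) \<Rightarrow> bool" where
  "random_lsc_K_convex M K G L \<longleftrightarrow> (\<forall>a\<in>space M. L a \<in> F_K K G) \<and>
     (\<lambda>p. L (fst p) (snd p)) \<in> borel_measurable (M \<Otimes>\<^sub>M restrict_space borel G)"

definition ereal_integral :: "'b measure \<Rightarrow> ('b \<Rightarrow> ereal) \<Rightarrow> ereal" where
  "ereal_integral M g = enn2ereal (\<integral>\<^sup>+ a. e2ennreal (g a) \<partial>M) - enn2ereal (\<integral>\<^sup>+ a. e2ennreal (- g a) \<partial>M)"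

end

theory Submission
  imports Defs
begin

text \<open>Subtracting the integrable minorant \<open>\<alpha>0\<close> splits
  \<open>f x = \<integral>\<^sup>+ (L a x - \<alpha>0 a) d\<mu> + \<integral> \<alpha>0 d\<mu>\<close> into a nonnegative integral plus a real constant;
  in particular \<open>f > -\<infinity>\<close>. Lower semicontinuity of \<open>f\<close> then follows from Fatou's lemma applied along
  sequences, and \<open>K\<close>-convexity from integrating the pointwise \<open>K\<close>-convexity inequality, using
  \<open>\<mu>(\<Pi>) = 1\<close> for the constant term.\<close>

lemma ennreal_parts_shift:
  fixes r h :: real
  assumes "h \<le> r"
  shows "ennreal r + ennreal (- h) = ennreal (r - h) + ennreal (- r) + ennreal h"
  using assms by (cases "0 \<le> h"; cases "0 \<le> r") (auto simp: ennreal_neg ennreal_plus[symmetric])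

lemma e2ennreal_parts_shift:
  fixes g :: ereal and h :: real
  assumes "ereal h \<le> g"
  shows "e2ennreal g + ennreal (- h) = e2ennreal (g - ereal h) + e2ennreal (- g) + ennreal h"
  using assms ennreal_parts_shift[of h] by (cases g) auto

lemma ereal_integral_eq_nn_integral_shift:
  assumes g[measurable]: "g \<in> borel_measurable M" and h: "integrable M h"
    and ae: "AE a in M. ereal (h a) \<le> g a"
  shows "ereal_integral M g
    = enn2ereal (\<integral>\<^sup>+a. e2ennreal (g a - ereal (h a)) \<partial>M) + ereal (integral\<^sup>L M h)"
proof -
  have [measurable]: "h \<in> borel_measurable M"
    using h by auto
  define Gp where "Gp = (\<integral>\<^sup>+a. e2ennreal (g a) \<partial>M)"
  define Gm where "Gm = (\<integral>\<^sup>+a. e2ennreal (- g a) \<partial>M)"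
  define Hp where "Hp = (\<integral>\<^sup>+a. ennreal (h a) \<partial>M)"
  define Hm where "Hm = (\<integral>\<^sup>+a. ennreal (- h a) \<partial>M)"
  define D where "D = (\<integral>\<^sup>+a. e2ennreal (g a - ereal (h a)) \<partial>M)"
  have "Gp + Hm = (\<integral>\<^sup>+a. e2ennreal (g a) + ennreal (- h a) \<partial>M)"
    unfolding Gp_def Hm_def by (rule nn_integral_add[symmetric]) auto
  also have "\<dots> = (\<integral>\<^sup>+a. e2ennreal (g a - ereal (h a)) + e2ennreal (- g a) + ennreal (h a) \<partial>M)"
    using ae by (intro nn_integral_cong_AE) (auto elim!: eventually_mono simp: e2ennreal_parts_shift)
  also have "\<dots> = D + Gm + Hp"
    unfolding D_def Gm_def Hp_def by (simp add: nn_integral_add)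
  finally have parts: "Gp + Hm = D + Gm + Hp" .
  have Hp_finite: "Hp \<noteq> \<infinity>" and Hm_finite: "Hm \<noteq> \<infinity>"
    using h unfolding Hp_def Hm_def real_integrable_def by auto
  have "Gm \<le> Hm"
    unfolding Gm_def Hm_def
  proof (rule nn_integral_mono_AE)
    show "AE a in M. e2ennreal (- g a) \<le> ennreal (- h a)"
      using ae
    proof eventually_elim
      case (elim a)
      then have "- g a \<le> ereal (- h a)"
        by (metis ereal_minus_le_minus uminus_ereal.simps(1))
      then show ?case
        by (metis e2ennreal_ereal e2ennreal_mono)
    qed
  qed
  with Hm_finite have Gm_finite: "Gm \<noteq> \<infinity>"
    by (auto simp: top_unique)
  have finite_real: "enn2ereal X = ereal (enn2real X)" if "X \<noteq> \<infinity>" for X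
    using that by (cases X rule: ennreal_cases) auto
  have "enn2ereal Gp + ereal (enn2real Hm) = enn2ereal D + ereal (enn2real Gm) + ereal (enn2real Hp)"
    using arg_cong[OF parts, of enn2ereal] finite_real[OF Hp_finite] finite_real[OF Hm_finite]
      finite_real[OF Gm_finite]
    by (simp add: plus_ennreal.rep_eq)
  then have "enn2ereal Gp - ereal (enn2real Gm) = enn2ereal D + ereal (enn2real Hp - enn2real Hm)"
    using enn2ereal_nonneg[of D] enn2ereal_nonneg[of Gp]
    by (cases "enn2ereal D"; cases "enn2ereal Gp") auto
  moreover have "integral\<^sup>L M h = enn2real Hp - enn2real Hm"
    unfolding Hp_def Hm_def by (rule real_lebesgue_integral_def[OF h])
  ultimately show ?thesis
    using finite_real[OF Gm_finite] unfolding ereal_integral_def Gp_def Gm_def D_def by simp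
qed

lemma lsc_on_imp_le_liminf:
  assumes lsc: "lsc_on G h" and x: "x \<in> G" and ys: "\<And>n. ys n \<in> G" "ys \<longlonglongrightarrow> x"
  shows "h x \<le> liminf (\<lambda>n. h (ys n))"
  unfolding le_Liminf_iff
proof (intro allI impI)
  fix c assume "c < h x"
  then obtain e where "e > 0" and e: "\<forall>y\<in>G. dist y x < e \<longrightarrow> c < h y"
    using lsc x unfolding lsc_on_def by blast
  then have "\<forall>\<^sub>F n in sequentially. dist (ys n) x < e"
    using ys(2) by (simp add: tendsto_iff)
  then show "\<forall>\<^sub>F n in sequentially. c < h (ys n)"
    by eventually_elim (use e ys(1) in blast)
qed

lemma lsc_onI_sequentially:
  assumes "\<And>x ys. x \<in> G \<Longrightarrow> (\<And>n. ys n \<in> G) \<Longrightarrow> ys \<longlonglongrightarrow> x \<Longrightarrow> h x \<le> liminf (\<lambda>n. h (ys n))"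
  shows "lsc_on G h"
  unfolding lsc_on_def
proof (intro ballI allI impI, rule ccontr)
  fix x c assume x: "x \<in> G" and "c < h x"
    and "\<not> (\<exists>e>0. \<forall>y\<in>G. dist y x < e \<longrightarrow> c < h y)"
  then have "\<exists>y\<in>G. dist y x < inverse (real (Suc n)) \<and> h y \<le> c" for n
    by (metis inverse_positive_iff_positive not_less of_nat_0_less_iff zero_less_Suc)
  then obtain ys where ys: "\<And>n. ys n \<in> G" "\<And>n. dist (ys n) x < inverse (real (Suc n))"
    "\<And>n. h (ys n) \<le> c"
    by metis
  have "ys \<longlonglongrightarrow> x"
    unfolding tendsto_iff
  proof (intro allI impI)
    fix e :: real assume "e > 0"
    then have "\<forall>\<^sub>F n in sequentially. inverse (real (Suc n)) < e"
      using Archimedean_eventually_inverse by blast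
    then show "\<forall>\<^sub>F n in sequentially. dist (ys n) x < e"
      by eventually_elim (use ys(2) in \<open>meson less_trans\<close>)
  qed
  then have "h x \<le> liminf (\<lambda>n. h (ys n))"
    using assms x ys(1) by blast
  also have "\<dots> \<le> c"
    by (rule Liminf_le) (use ys(3) in auto)
  finally show False
    using \<open>c < h x\<close> by simp
qed

lemma nn_integral_shift_le_liminf:
  assumes lsc: "\<forall>a\<in>space M. lsc_on G (L a)"
    and meas: "\<And>x. x \<in> G \<Longrightarrow> (\<lambda>a. L a x) \<in> borel_measurable M"
    and \<alpha>: "\<alpha> \<in> borel_measurable M"
    and x: "x \<in> G" and ys: "\<And>n. ys n \<in> G" "ys \<longlonglongrightarrow> x"
  shows "(\<integral>\<^sup>+a. e2ennreal (L a x - ereal (\<alpha> a)) \<partial>M)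
    \<le> liminf (\<lambda>n. \<integral>\<^sup>+a. e2ennreal (L a (ys n) - ereal (\<alpha> a)) \<partial>M)"
proof -
  have "(\<integral>\<^sup>+a. e2ennreal (L a x - ereal (\<alpha> a)) \<partial>M)
      \<le> (\<integral>\<^sup>+a. liminf (\<lambda>n. e2ennreal (L a (ys n) - ereal (\<alpha> a))) \<partial>M)"
  proof (rule nn_integral_mono)
    fix a assume a: "a \<in> space M"
    have "L a x - ereal (\<alpha> a) \<le> liminf (\<lambda>n. L a (ys n)) - ereal (\<alpha> a)"
      using lsc_on_imp_le_liminf[OF _ x ys] lsc a by (simp add: ereal_minus_mono)
    also have "\<dots> = liminf (\<lambda>n. L a (ys n) - ereal (\<alpha> a))"
      using Liminf_add_ereal_right[of sequentially "- ereal (\<alpha> a)"] by (simp add: minus_ereal_def)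
    finally show "e2ennreal (L a x - ereal (\<alpha> a)) \<le> liminf (\<lambda>n. e2ennreal (L a (ys n) - ereal (\<alpha> a)))"
      using Liminf_compose_continuous_mono[OF continuous_on_e2ennreal, of sequentially]
      by (simp add: e2ennreal_mono mono_def)
  qed
  also have "\<dots> \<le> liminf (\<lambda>n. \<integral>\<^sup>+a. e2ennreal (L a (ys n) - ereal (\<alpha> a)) \<partial>M)"
    by (rule nn_integral_liminf) (use meas ys(1) \<alpha> in measurable)
  finally show ?thesis .
qed

lemma ereal_convex_comb_add:
  fixes u v :: ereal
  assumes "0 \<le> t" "t \<le> 1" "u \<noteq> -\<infinity>" "v \<noteq> -\<infinity>"
  shows "ereal (1 - t) * (u + ereal a) + ereal t * (v + ereal a) = ereal (1 - t) * u + ereal t * v + ereal a"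
  using assms by (cases u; cases v; cases "t = 0"; cases "t = 1") (auto simp: algebra_simps)

lemma e2ennreal_shift_convex:
  fixes u v w :: ereal
  assumes t: "0 \<le> t" "t \<le> 1" and c: "0 \<le> c"
    and le: "ereal \<alpha> \<le> u" "ereal \<alpha> \<le> v" "ereal \<alpha> \<le> w"
    and cv: "w \<le> ereal (1 - t) * u + ereal t * v - ereal c"
  shows "e2ennreal (w - ereal \<alpha>) + ennreal c
    \<le> ennreal (1 - t) * e2ennreal (u - ereal \<alpha>) + ennreal t * e2ennreal (v - ereal \<alpha>)"
proof -
  have nonneg: "0 \<le> u - ereal \<alpha>" "0 \<le> v - ereal \<alpha>" "0 \<le> w - ereal \<alpha>"
    using le by (auto simp: ereal_le_minus_iff)
  have "w - ereal \<alpha> + ereal c \<le> ereal (1 - t) * u + ereal t * v - ereal \<alpha>"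
    using cv le(3) by (cases w; cases "ereal (1 - t) * u + ereal t * v") auto
  also have "\<dots> = ereal (1 - t) * (u - ereal \<alpha>) + ereal t * (v - ereal \<alpha>)"
  proof -
    have "u \<noteq> -\<infinity>" "v \<noteq> -\<infinity>" using le by auto
    then show ?thesis using t ereal_convex_comb_add[of t u v "- \<alpha>"] by (simp add: minus_ereal_def)
  qed
  finally show ?thesis
    using nonneg t c
    by (simp add: less_eq_ennreal.rep_eq plus_ennreal.rep_eq times_ennreal.rep_eq enn2ereal_e2ennreal)
qed

lemma ereal_convex_ineq_add_const:
  fixes X Y Z :: ereal
  assumes "0 \<le> X" "0 \<le> Y" "0 \<le> Z" and t: "0 \<le> t" "t \<le> 1"
    and le: "Z + ereal c \<le> ereal (1 - t) * X + ereal t * Y"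
  shows "Z + ereal C \<le> ereal (1 - t) * (X + ereal C) + ereal t * (Y + ereal C) - ereal c"
proof -
  have "Z + ereal C \<le> ereal (1 - t) * X + ereal t * Y + ereal C - ereal c"
    using le assms(3) by (cases Z; cases "ereal (1 - t) * X + ereal t * Y") auto
  also have "ereal (1 - t) * X + ereal t * Y + ereal C = ereal (1 - t) * (X + ereal C) + ereal t * (Y + ereal C)"
    using assms by (simp add: ereal_convex_comb_add)
  finally show ?thesis .
qed

lemma random_lsc_K_convex_section_measurable:
  assumes "random_lsc_K_convex M K G L" and "x \<in> G"
  shows "(\<lambda>a. L a x) \<in> borel_measurable M"
proof -
  have pair: "(\<lambda>a. (a, x)) \<in> M \<rightarrow>\<^sub>M M \<Otimes>\<^sub>M restrict_space borel G"
    using assms(2) by (intro measurable_Pair2') (simp add: space_restrict_space)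
  have "(\<lambda>p. L (fst p) (snd p)) \<in> borel_measurable (M \<Otimes>\<^sub>M restrict_space borel G)"
    using assms(1) unfolding random_lsc_K_convex_def by simp
  from measurable_comp[OF pair this] show ?thesis
    by (simp add: comp_def)
qed

context
  fixes M :: "'b measure" and K :: real and G :: "'a::metric_space set"
    and L :: "'b \<Rightarrow> 'a \<Rightarrow> ereal" and \<alpha> :: "'b \<Rightarrow> real"
  assumes random: "random_lsc_K_convex M K G L"
    and integrable: "integrable M \<alpha>"
    and lower_bound: "\<forall>x\<in>G. AE a in M. ereal (\<alpha> a) \<le> L a x"
begin

lemma ereal_integral_section_eq:
  assumes "x \<in> G"
  shows "ereal_integral M (\<lambda>a. L a x)
    = enn2ereal (\<integral>\<^sup>+a. e2ennreal (L a x - ereal (\<alpha> a)) \<partial>M) + ereal (integral\<^sup>L M \<alpha>)"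
  using assms lower_bound
  by (intro ereal_integral_eq_nn_integral_shift random_lsc_K_convex_section_measurable[OF random]
      integrable) auto

lemma ereal_integral_lsc: "lsc_on G (\<lambda>x. ereal_integral M (\<lambda>a. L a x))"
proof (rule lsc_onI_sequentially)
  fix x ys assume x: "x \<in> G" and ys: "\<And>n. ys n \<in> G" "ys \<longlonglongrightarrow> x"
  define D where "D y = (\<integral>\<^sup>+a. e2ennreal (L a y - ereal (\<alpha> a)) \<partial>M)" for y
  have "D x \<le> liminf (\<lambda>n. D (ys n))"
    unfolding D_def
  proof (rule nn_integral_shift_le_liminf[OF _ _ _ x ys])
    show "\<forall>a\<in>space M. lsc_on G (L a)"
      using random unfolding random_lsc_K_convex_def F_K_def by auto
  qed (use random integrable random_lsc_K_convex_section_measurable in auto)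
  then have "enn2ereal (D x) \<le> liminf (\<lambda>n. enn2ereal (D (ys n)))"
    using Liminf_compose_continuous_mono[OF continuous_on_enn2ereal, of sequentially]
    by (simp add: less_eq_ennreal.rep_eq mono_def)
  then have "enn2ereal (D x) + ereal (integral\<^sup>L M \<alpha>)
      \<le> liminf (\<lambda>n. enn2ereal (D (ys n)) + ereal (integral\<^sup>L M \<alpha>))"
    by (simp add: Liminf_add_ereal_right add_right_mono)
  then show "ereal_integral M (\<lambda>a. L a x) \<le> liminf (\<lambda>n. ereal_integral M (\<lambda>a. L a (ys n)))"
    using x ys(1) by (simp add: ereal_integral_section_eq D_def)
qed

lemma ereal_integral_K_convex:
  assumes "prob_space M" and "0 \<le> K" and "geodesically_convex G"
  shows "K_convex_on K G (\<lambda>x. ereal_integral M (\<lambda>a. L a x))"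
  unfolding K_convex_on_def
proof (intro ballI allI impI)
  fix x y :: 'a and \<gamma> :: "real \<Rightarrow> 'a" and t :: real
  assume x: "x \<in> G" and y: "y \<in> G" and \<gamma>: "min_geodesic \<gamma> x y" and t: "t \<in> {0..1}"
  define z where "z = \<gamma> t"
  have z: "z \<in> G"
    using assms(3) x y \<gamma> t unfolding geodesically_convex_def z_def by blast
  define c where "c = K / 2 * t * (1 - t) * (dist x y)\<^sup>2"
  have c: "0 \<le> c"
    unfolding c_def using assms(2) t by auto
  define D where "D w = (\<integral>\<^sup>+a. e2ennreal (L a w - ereal (\<alpha> a)) \<partial>M)" for w
  have [measurable]: "(\<lambda>a. L a w) \<in> borel_measurable M" if "w \<in> G" for w
    using random_lsc_K_convex_section_measurable[OF random that] .
  have [measurable]: "\<alpha> \<in> borel_measurable M"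
    using integrable by auto
  have pointwise: "AE a in M. e2ennreal (L a z - ereal (\<alpha> a)) + ennreal c
      \<le> ennreal (1 - t) * e2ennreal (L a x - ereal (\<alpha> a)) + ennreal t * e2ennreal (L a y - ereal (\<alpha> a))"
    using AE_space lower_bound[rule_format, OF x] lower_bound[rule_format, OF y]
      lower_bound[rule_format, OF z]
  proof eventually_elim
    case (elim a)
    then have "L a z \<le> ereal (1 - t) * L a x + ereal t * L a y - ereal c"
      using random x y \<gamma> t unfolding random_lsc_K_convex_def F_K_def K_convex_on_def z_def c_def by blast
    with elim t c show ?case
      by (intro e2ennreal_shift_convex) auto
  qed
  have "D z + ennreal c = (\<integral>\<^sup>+a. e2ennreal (L a z - ereal (\<alpha> a)) + ennreal c \<partial>M)"
    unfolding D_def using z by (simp add: nn_integral_add prob_space.emeasure_space_1[OF assms(1)])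
  also have "\<dots> \<le> (\<integral>\<^sup>+a. ennreal (1 - t) * e2ennreal (L a x - ereal (\<alpha> a))
      + ennreal t * e2ennreal (L a y - ereal (\<alpha> a)) \<partial>M)"
    by (rule nn_integral_mono_AE[OF pointwise])
  also have "\<dots> = ennreal (1 - t) * D x + ennreal t * D y"
    unfolding D_def using x y by (simp add: nn_integral_add nn_integral_cmult)
  finally have "enn2ereal (D z) + ereal c
      \<le> ereal (1 - t) * enn2ereal (D x) + ereal t * enn2ereal (D y)"
    using t c by (simp add: less_eq_ennreal.rep_eq plus_ennreal.rep_eq times_ennreal.rep_eq)
  then have "enn2ereal (D z) + ereal (integral\<^sup>L M \<alpha>)
      \<le> ereal (1 - t) * (enn2ereal (D x) + ereal (integral\<^sup>L M \<alpha>))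
        + ereal t * (enn2ereal (D y) + ereal (integral\<^sup>L M \<alpha>)) - ereal c"
    using t by (intro ereal_convex_ineq_add_const) auto
  then show "ereal_integral M (\<lambda>a. L a (\<gamma> t))
      \<le> ereal (1 - t) * ereal_integral M (\<lambda>a. L a x) + ereal t * ereal_integral M (\<lambda>a. L a y)
        - ereal (K / 2 * t * (1 - t) * (dist x y)\<^sup>2)"
    using x y z by (simp add: ereal_integral_section_eq D_def z_def c_def)
qed

lemma ereal_integral_gt_MInfty:
  assumes "x \<in> G"
  shows "ereal_integral M (\<lambda>a. L a x) > -\<infinity>"
  using assms by (simp add: ereal_integral_section_eq)

end

theorem lemma6p2:
  fixes G :: "'a::metric_space set" and K :: real and M :: "'b measure"
    and L :: "'b \<Rightarrow> 'a \<Rightarrow> ereal" and \<alpha>0 :: "'b \<Rightarrow> real"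
  assumes "alexandrov_space TYPE('a)"
    and "closed G" and "geodesically_convex G" and "separable_set G"
    and "K > 0"
    and "prob_space M" and "complete_measure M"
    and "random_lsc_K_convex M K G L"
    and "integrable M \<alpha>0"
    and "\<forall>x\<in>G. AE a in M. L a x \<ge> ereal (\<alpha>0 a)"
  shows "lsc_on G (\<lambda>x. ereal_integral M (\<lambda>a. L a x))
    \<and> K_convex_on K G (\<lambda>x. ereal_integral M (\<lambda>a. L a x))
    \<and> (\<forall>x\<in>G. ereal_integral M (\<lambda>a. L a x) > -\<infinity>)"
  using ereal_integral_lsc[OF assms(8-10)] ereal_integral_K_convex[OF assms(8-10) assms(6) _ assms(3)]
    ereal_integral_gt_MInfty[OF assms(8-10)] assms(5)
  by simp

end
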